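(* For any $p\in(0,1)$, under the Alternating Path Randomized Design with parameter $p$, the Horvitz–Thompson estimator $\hat\tau_{\mathrm{AP}}$ is unbiased for the average treatment effect: $\mathbb{E}[\hat\tau_{\mathrm{AP}}]=\tau$.
   Context: Setting: $2N$ agents; $\mathbb{M}^t,\mathbb{M}^c$ are one-to-one matchings (sets of unordered pairs of distinct agents, each agent in at most one pair). Each pair $(a,b)$ has a fixed real potential outcome $Y_{a,b}$ (non-random; randomness comes only from the design). Estimand: $\tau=\frac1N\big(\sum_{(a,b)\in\mathbb{M}^t}Y_{a,b}-\sum_{(a,b)\in\mathbb{M}^c}Y_{a,b}\big)$. The disagreement set $\triangle\mathbb{M}^{(t,c)}=(\mathbb{M}^t\cup\mathbb{M}^c)\setminus(\mathbb{M}^t\cap\mathbb{M}^c)$, viewed as a graph, has connected components $\mathcal{P}_1,\dots,\mathcal{P}_m$, each an alternating path or cycle: a sequence $(v_{i,1},\dots,v_{i,k(i)+1})$ whose consecutive pairs $e_{i,j}=(v_{i,j},v_{i,j+1})$, $j=1,\dots,k(i)$, are the component's edges, alternating between $\triangle\mathbb{M}^{(t,c)}_t=\triangle\mathbb{M}^{(t,c)}\cap\mathbb{M}^t$ and $\triangle\mathbb{M}^{(t,c)}_c=\triangle\mathbb{M}^{(t,c)}\cap\mathbb{M}^c$; it is a cycle if $v_{i,1}=v_{i,k(i)+1}$, a path otherwise. Alternating Path Randomized Design with parameter $p$: indicators $W_{i,j}\in\{0,1\}$, independent across components; within $\mathcal{P}_i$, $\mathbb{P}(W_{i,1}=1)=p/(1+p)$;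 for $2\le j\le k(i)$ (path) or $2\le j\le k(i)-1$ (cycle), conditionally on $W_{i,1},\dots,W_{i,j-1}$, $W_{i,j}=1$ with probability $p$ if $W_{i,j-1}=0$ and $W_{i,j}=0$ if $W_{i,j-1}=1$; for a cycle, $W_{i,k(i)}=1$ iff $W_{i,1}=W_{i,k(i)-1}=0$. Horvitz–Thompson estimator: \[\hat\tau_{\mathrm{AP}}=\frac1N\sum_{i=1}^m\Big(\sum_{j:\,e_{i,j}\in\triangle\mathbb{M}^{(t,c)}_t}\frac{W_{i,j}Y_{e_{i,j}}}{\mathbb{P}(W_{i,j}=1)}-\sum_{j:\,e_{i,j}\in\triangle\mathbb{M}^{(t,c)}_c}\frac{W_{i,j}Y_{e_{i,j}}}{\mathbb{P}(W_{i,j}=1)}\Big).\] *)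

theory Defs
  imports "HOL-Probability.Probability"
begin

text \<open>An unordered pair of distinct agents is represented as a two-element set.\<close>

definition is_matching :: "'a set \<Rightarrow> 'a set set \<Rightarrow> bool" where
  "is_matching A M \<longleftrightarrow>
     (\<forall>e\<in>M. card e = 2 \<and> e \<subseteq> A) \<and>
     (\<forall>e\<in>M. \<forall>e'\<in>M. e \<noteq> e' \<longrightarrow> e \<inter> e' = {})"

definition disagree :: "'a set set \<Rightarrow> 'a set set \<Rightarrow> 'a set set" where
  "disagree Mt Mc = (Mt \<union> Mc) - (Mt \<inter> Mc)"

definition disagree_t :: "'a set set \<Rightarrow> 'a set set \<Rightarrow> 'a set set" where
  "disagree_t Mt Mc = disagree Mt Mc \<inter> Mt"

definition disagree_c :: "'a set set \<Rightarrow> 'a set set \<Rightarrow> 'a set set" where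
  "disagree_c Mt Mc = disagree Mt Mc \<inter> Mc"

definition ate :: "nat \<Rightarrow> 'a set set \<Rightarrow> 'a set set \<Rightarrow> ('a set \<Rightarrow> real) \<Rightarrow> real" where
  "ate N Mt Mc Y = (1 / real N) * ((\<Sum>e\<in>Mt. Y e) - (\<Sum>e\<in>Mc. Y e))"

text \<open>A component is given by its vertex sequence (v_1,...,v_{k+1}); its edges are
  e_j = {v_j, v_{j+1}} (here 0-indexed: j < k). It is a cycle iff v_1 = v_{k+1}.\<close>

definition comp_len :: "'a list \<Rightarrow> nat" where
  "comp_len vs = length vs - 1"

definition comp_edge :: "'a list \<Rightarrow> nat \<Rightarrow> 'a set" where
  "comp_edge vs j = {vs ! j, vs ! Suc j}"

definition comp_edges :: "'a list \<Rightarrow> 'a set set" where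
  "comp_edges vs = comp_edge vs ` {..<comp_len vs}"

definition is_cycle :: "'a list \<Rightarrow> bool" where
  "is_cycle vs \<longleftrightarrow> hd vs = last vs"

definition alt_decomposition ::
  "'a set set \<Rightarrow> 'a set set \<Rightarrow> 'a list list \<Rightarrow> bool" where
  "alt_decomposition Mt Mc comps \<longleftrightarrow>
     (\<forall>vs\<in>set comps.
        length vs \<ge> 2 \<and>
        (if is_cycle vs then distinct (butlast vs) else distinct vs) \<and>
        comp_edges vs \<subseteq> disagree Mt Mc \<and>
        (\<forall>j. Suc j < comp_len vs \<longrightarrow>
              (comp_edge vs j \<in> Mt \<longleftrightarrow> comp_edge vs (Suc j) \<in> Mc))) \<and>
     (\<Union>vs\<in>set comps. comp_edges vs) = disagree Mt Mc \<and>
     (\<forall>i<length comps. \<forall>i'<length comps. i \<noteq> i' \<longrightarrow>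
        set (comps ! i) \<inter> set (comps ! i') = {})"

fun ap_chain :: "real \<Rightarrow> nat \<Rightarrow> bool \<Rightarrow> bool list pmf" where
  "ap_chain p 0 prev = return_pmf []"
| "ap_chain p (Suc n) prev =
     do { w \<leftarrow> (if prev then return_pmf False else bernoulli_pmf p);
          ws \<leftarrow> ap_chain p n w;
          return_pmf (w # ws) }"

definition ap_path_design :: "real \<Rightarrow> nat \<Rightarrow> bool list pmf" where
  "ap_path_design p k =
     do { w1 \<leftarrow> bernoulli_pmf (p / (1 + p));
          ws \<leftarrow> ap_chain p (k - 1) w1;
          return_pmf (w1 # ws) }"

definition ap_cycle_design :: "real \<Rightarrow> nat \<Rightarrow> bool list pmf" where
  "ap_cycle_design p k =
     do { w1 \<leftarrow> bernoulli_pmf (p / (1 + p));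
          ws \<leftarrow> ap_chain p (k - 2) w1;
          return_pmf (w1 # ws @ [\<not> w1 \<and> \<not> last (w1 # ws)]) }"

definition ap_comp_design :: "real \<Rightarrow> 'a list \<Rightarrow> bool list pmf" where
  "ap_comp_design p vs =
     (if is_cycle vs then ap_cycle_design p (comp_len vs) else ap_path_design p (comp_len vs))"

fun ap_design :: "real \<Rightarrow> 'a list list \<Rightarrow> bool list list pmf" where
  "ap_design p [] = return_pmf []"
| "ap_design p (vs # vss) =
     do { w \<leftarrow> ap_comp_design p vs;
          ws \<leftarrow> ap_design p vss;
          return_pmf (w # ws) }"

definition ap_prob :: "real \<Rightarrow> 'a list \<Rightarrow> nat \<Rightarrow> real" where
  "ap_prob p vs j = measure_pmf.prob (ap_comp_design p vs) {w. w ! j}"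

definition ht_estimator ::
  "real \<Rightarrow> nat \<Rightarrow> 'a set set \<Rightarrow> 'a set set \<Rightarrow> ('a set \<Rightarrow> real) \<Rightarrow> 'a list list
     \<Rightarrow> bool list list \<Rightarrow> real" where
  "ht_estimator p N Mt Mc Y comps W =
     (1 / real N) *
     (\<Sum>i<length comps.
        (\<Sum>j\<in>{j. j < comp_len (comps ! i) \<and> comp_edge (comps ! i) j \<in> disagree_t Mt Mc}.
            (if W ! i ! j then 1 else 0) * Y (comp_edge (comps ! i) j) / ap_prob p (comps ! i) j)
        - (\<Sum>j\<in>{j. j < comp_len (comps ! i) \<and> comp_edge (comps ! i) j \<in> disagree_c Mt Mc}.
            (if W ! i ! j then 1 else 0) * Y (comp_edge (comps ! i) j) / ap_prob p (comps ! i) j))"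

end

(* By linearity, the expected estimator is a signed sum over the edges e_{i,j}
   of the components of E[W_{i,j}] Y(e_{i,j}) / P(W_{i,j} = 1) = Y(e_{i,j}); this needs every
   marginal P(W_{i,j} = 1) to be positive, which is witnessed by an assignment in the support
   of the design with a single 1 (on the closing edge of a cycle: with all other entries 0).
   The edges of the components enumerate the disagreement set bijectively, so the sum becomes
   the sum of Y over Mt - Mc minus the sum over Mc - Mt, which is the sum over Mt minus the
   sum over Mc. *)

theory Submission
  imports Defs
begin

lemma finite_set_pmf_ap_chain: "finite (set_pmf (ap_chain p n b))"
  by (induction n arbitrary: b) auto

lemma finite_set_pmf_ap_comp_design: "finite (set_pmf (ap_comp_design p vs))"
  unfolding ap_comp_design_def ap_path_design_def ap_cycle_design_def
  by (auto simp: finite_set_pmf_ap_chain)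

lemma finite_set_pmf_ap_design: "finite (set_pmf (ap_design p comps))"
  by (induction comps) (auto simp: finite_set_pmf_ap_comp_design)

lemma map_pmf_nth_ap_design:
  "i < length comps \<Longrightarrow> map_pmf (\<lambda>W. W ! i) (ap_design p comps) = ap_comp_design p (comps ! i)"
proof (induction comps arbitrary: i)
  case (Cons vs vss)
  then show ?case
    by (cases i) (simp_all add: map_bind_pmf map_pmf_def[symmetric] map_pmf_comp bind_return_pmf')
qed simp

fun no_adjacent_ones :: "bool \<Rightarrow> bool list \<Rightarrow> bool" where
  "no_adjacent_ones b [] = True"
| "no_adjacent_ones b (w # ws) \<longleftrightarrow> \<not> (b \<and> w) \<and> no_adjacent_ones w ws"

lemma no_adjacent_ones_replicate_False: "no_adjacent_ones b (replicate n False)"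
  by (induction n arbitrary: b) auto

lemma no_adjacent_ones_update_replicate_False:
  "(b \<longrightarrow> j > 0) \<Longrightarrow> no_adjacent_ones b ((replicate n False)[j := True])"
proof (induction n arbitrary: b j)
  case (Suc n)
  then show ?case
    by (cases j) (auto simp: no_adjacent_ones_replicate_False)
qed simp

lemma set_pmf_ap_chainI:
  assumes "0 < p" "p < 1" "length ws = n" "no_adjacent_ones b ws"
  shows "ws \<in> set_pmf (ap_chain p n b)"
  using assms(3,4)
proof (induction n arbitrary: b ws)
  case (Suc n)
  then obtain w ws' where "ws = w # ws'" by (cases ws) auto
  with Suc assms(1,2) show ?case by auto
qed simp

lemma set_pmf_ap_path_designI:
  assumes "0 < p" "p < 1" "length ws = k" "0 < k" "no_adjacent_ones False ws"
  shows "ws \<in> set_pmf (ap_path_design p k)"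
proof -
  obtain w ws' where ws: "ws = w # ws'" using assms(3,4) by (cases ws) auto
  have "ws' \<in> set_pmf (ap_chain p (k - 1) w)"
    using assms ws by (intro set_pmf_ap_chainI) auto
  then show ?thesis using assms(1,2) ws by (auto simp: ap_path_design_def)
qed

lemma set_pmf_ap_cycle_designI:
  assumes "0 < p" "p < 1" "length ws = Suc (k - 2)" "no_adjacent_ones False ws"
  shows "ws @ [\<not> hd ws \<and> \<not> last ws] \<in> set_pmf (ap_cycle_design p k)"
proof -
  obtain w ws' where ws: "ws = w # ws'" using assms(3) by (cases ws) auto
  have "ws' \<in> set_pmf (ap_chain p (k - 2) w)"
    using assms ws by (intro set_pmf_ap_chainI) auto
  then show ?thesis using assms(1,2) ws by (auto simp: ap_cycle_design_def)
qed

lemma ap_prob_pos: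
  assumes "0 < p" "p < 1" "j < comp_len vs"
  shows "ap_prob p vs j > 0"
proof -
  let ?k = "comp_len vs"
  let ?single = "\<lambda>n. (replicate n False)[j := True]"
  obtain w where "w \<in> set_pmf (ap_comp_design p vs)" "w ! j"
  proof (cases "is_cycle vs")
    case False
    have "?single ?k \<in> set_pmf (ap_path_design p ?k)"
      using assms by (intro set_pmf_ap_path_designI no_adjacent_ones_update_replicate_False) auto
    with False show ?thesis
      using that assms(3) by (simp add: ap_comp_design_def)
  next
    case True
    let ?m = "Suc (?k - 2)" \<comment> \<open>length of the freely drawn prefix \<open>W\<^sub>1 \<dots> W\<^bsub>k-1\<^esub>\<close>\<close>
    have cycle: "ap_comp_design p vs = ap_cycle_design p ?k"
      using True by (simp add: ap_comp_design_def)
    show ?thesis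
    proof (cases "j < ?m")
      case True
      let ?w = "?single ?m"
      have "?w @ [\<not> hd ?w \<and> \<not> last ?w] \<in> set_pmf (ap_cycle_design p ?k)"
        using assms True
        by (intro set_pmf_ap_cycle_designI no_adjacent_ones_update_replicate_False)
          (auto simp del: replicate_Suc)
      with True show ?thesis
        using that cycle by (simp add: nth_append del: replicate_Suc)
    next
      case False
      then have "j = ?m" using assms(3) by linarith
      let ?w = "replicate ?m False"
      have "?w @ [\<not> hd ?w \<and> \<not> last ?w] \<in> set_pmf (ap_cycle_design p ?k)"
        using assms by (intro set_pmf_ap_cycle_designI no_adjacent_ones_replicate_False) auto
      with \<open>j = ?m\<close> show ?thesis
        using that cycle by (simp add: nth_append)
    qed
  qed
  then show ?thesis
    unfolding ap_prob_def by (intro measure_pmf_posI) auto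
qed

lemma comp_vertex_eq:
  assumes "length vs \<ge> 2" and dist: "if is_cycle vs then distinct (butlast vs) else distinct vs"
    and "a < b" "b \<le> comp_len vs" "vs ! a = vs ! b"
  shows "is_cycle vs \<and> a = 0 \<and> b = comp_len vs"
proof -
  let ?k = "comp_len vs"
  have len: "length vs = Suc ?k" using assms(1) by (simp add: comp_len_def)
  show ?thesis
  proof (cases "is_cycle vs")
    case False
    with assms len show ?thesis by (auto simp: nth_eq_iff_index_eq)
  next
    case True
    have inj: "c = d" if "c < ?k" "d < ?k" "vs ! c = vs ! d" for c d
      using True dist that len by (metis length_butlast diff_Suc_1 nth_butlast nth_eq_iff_index_eq)
    have "b = ?k" using inj[of a b] assms(3-5) by fastforce
    moreover have "vs ! ?k = vs ! 0"
      using True len by (metis is_cycle_def diff_Suc_1 hd_conv_nth last_conv_nth Zero_not_Suc list.size(3))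
    ultimately show ?thesis using True inj[of a 0] assms(3,5) by auto
  qed
qed

lemma comp_edge_eq:
  assumes "length vs \<ge> 2" "if is_cycle vs then distinct (butlast vs) else distinct vs"
    and "j < j'" "j' < comp_len vs" "comp_edge vs j = comp_edge vs j'"
  shows "j = 0 \<and> j' = 1 \<and> comp_len vs = 2"
proof -
  note vertex_eq = comp_vertex_eq[OF assms(1,2)]
  have "vs ! j \<noteq> vs ! j'" using vertex_eq[of j j'] assms(3,4) by auto
  then have "vs ! j = vs ! Suc j'" "vs ! Suc j = vs ! j'"
    using assms(5) by (auto simp: comp_edge_def doubleton_eq_iff)
  moreover have "j' = Suc j"
    using vertex_eq[of "Suc j" j'] assms(3,4) \<open>vs ! Suc j = vs ! j'\<close> by (cases "Suc j = j'") auto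
  ultimately show ?thesis using vertex_eq[of j "Suc j'"] assms(4) by auto
qed

lemma inj_on_comp_edge:
  assumes "length vs \<ge> 2" "if is_cycle vs then distinct (butlast vs) else distinct vs"
    and "comp_edges vs \<subseteq> disagree Mt Mc"
    and "\<forall>j. Suc j < comp_len vs \<longrightarrow> (comp_edge vs j \<in> Mt \<longleftrightarrow> comp_edge vs (Suc j) \<in> Mc)"
  shows "inj_on (comp_edge vs) {..<comp_len vs}"
proof -
  have "comp_edge vs j \<noteq> comp_edge vs j'" if "j < j'" "j' < comp_len vs" for j j'
  proof
    \<comment> \<open>only a cycle of two edges repeats an edge, and alternation would put it in both matchings\<close>
    assume eq: "comp_edge vs j = comp_edge vs j'"
    then have "j = 0" "j' = 1" "comp_len vs = 2"
      using comp_edge_eq[OF assms(1,2) that] by auto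
    moreover have "comp_edge vs 0 \<in> disagree Mt Mc"
      using assms(3) \<open>comp_len vs = 2\<close> by (auto simp: comp_edges_def)
    ultimately show False
      using assms(4) eq by (auto simp: disagree_def)
  qed
  then show ?thesis
    by (metis inj_onI lessThan_iff linorder_neqE_nat)
qed

lemma bij_betw_comp_edge_disagree:
  assumes "alt_decomposition Mt Mc comps"
  shows "bij_betw (\<lambda>(i, j). comp_edge (comps ! i) j)
           (SIGMA i:{..<length comps}. {..<comp_len (comps ! i)}) (disagree Mt Mc)"
proof -
  note decomp = assms[unfolded alt_decomposition_def]
  have edge_in_comp: "comp_edge vs j \<subseteq> set vs" if "j < comp_len vs" for vs :: "'a list" and j
    using that by (auto simp: comp_edge_def comp_len_def)
  have "inj_on (\<lambda>(i, j). comp_edge (comps ! i) j)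
          (SIGMA i:{..<length comps}. {..<comp_len (comps ! i)})"
  proof (rule inj_onI, clarsimp)
    fix i j i' j'
    assume i: "i < length comps" "j < comp_len (comps ! i)"
      and i': "i' < length comps" "j' < comp_len (comps ! i')"
      and eq: "comp_edge (comps ! i) j = comp_edge (comps ! i') j'"
    show "i = i' \<and> j = j'"
    proof (cases "i = i'")
      case True
      have "inj_on (comp_edge (comps ! i)) {..<comp_len (comps ! i)}"
        using decomp i(1) by (intro inj_on_comp_edge[of _ Mt Mc]) auto
      with True i i' eq show ?thesis by (auto dest: inj_onD)
    next
      case False
      then have "set (comps ! i) \<inter> set (comps ! i') = {}" using decomp i(1) i'(1) by blast
      moreover have "comp_edge (comps ! i) j \<noteq> {}" by (simp add: comp_edge_def)
      ultimately show ?thesis using edge_in_comp[OF i(2)] edge_in_comp[OF i'(2)] eq by blast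
    qed
  qed
  moreover have "(\<lambda>(i, j). comp_edge (comps ! i) j) `
      (SIGMA i:{..<length comps}. {..<comp_len (comps ! i)}) = (\<Union>vs\<in>set comps. comp_edges vs)"
    by (fastforce simp: comp_edges_def in_set_conv_nth)
  ultimately show ?thesis using decomp by (simp add: bij_betw_def)
qed

lemma sum_disagree_subset_by_components:
  assumes "alt_decomposition Mt Mc comps" "D \<subseteq> disagree Mt Mc"
  shows "(\<Sum>i<length comps. \<Sum>j\<in>{j. j < comp_len (comps ! i) \<and> comp_edge (comps ! i) j \<in> D}.
            g (comp_edge (comps ! i) j)) = sum g D"
proof -
  let ?e = "\<lambda>(i, j). comp_edge (comps ! i) j"
  let ?S = "SIGMA i:{..<length comps}. {..<comp_len (comps ! i)}"
  have bij: "bij_betw ?e ?S (disagree Mt Mc)"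
    by (rule bij_betw_comp_edge_disagree[OF assms(1)])
  have "bij_betw ?e {x \<in> ?S. ?e x \<in> D} D"
  proof (rule bij_betw_subset[OF bij])
    have "?e ` {x \<in> ?S. ?e x \<in> D} = ?e ` ?S \<inter> D" by auto
    then show "?e ` {x \<in> ?S. ?e x \<in> D} = D"
      using assms(2) bij_betw_imp_surj_on[OF bij] by auto
  qed auto
  then have "sum (g \<circ> ?e) {x \<in> ?S. ?e x \<in> D} = sum g D"
    by (simp add: sum.reindex_bij_betw comp_def)
  moreover have "{x \<in> ?S. ?e x \<in> D} =
      (SIGMA i:{..<length comps}. {j. j < comp_len (comps ! i) \<and> comp_edge (comps ! i) j \<in> D})"
    by auto
  ultimately show ?thesis
    by (simp add: sum.Sigma case_prod_beta comp_def)
qed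

lemma finite_matching: "is_matching A M \<Longrightarrow> finite A \<Longrightarrow> finite M"
  unfolding is_matching_def by (meson Pow_iff finite_Pow_iff finite_subset subsetI)

lemma sum_disagree_t_diff_sum_disagree_c:
  fixes g :: "'a set \<Rightarrow> 'b::ab_group_add"
  assumes "finite Mt" "finite Mc"
  shows "sum g (disagree_t Mt Mc) - sum g (disagree_c Mt Mc) = sum g Mt - sum g Mc"
proof -
  have "disagree_t Mt Mc = Mt - Mc" "disagree_c Mt Mc = Mc - Mt"
    by (auto simp: disagree_t_def disagree_c_def disagree_def)
  moreover have "sum g Mt = sum g (Mt \<inter> Mc) + sum g (Mt - Mc)"
    "sum g Mc = sum g (Mt \<inter> Mc) + sum g (Mc - Mt)"
    using sum.Int_Diff[OF assms(1), of g Mc] sum.Int_Diff[OF assms(2), of g Mt]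
    by (simp_all add: Int_commute)
  ultimately show ?thesis by simp
qed

lemma expectation_ap_design_indicator:
  assumes "i < length comps"
  shows "measure_pmf.expectation (ap_design p comps) (\<lambda>W. if W ! i ! j then 1 else 0)
           = ap_prob p (comps ! i) j"
proof -
  have "(\<lambda>W. if W ! i ! j then 1 else 0 :: real) = indicator {W. W ! i ! j}"
    by (auto simp: indicator_def)
  then show ?thesis
    unfolding ap_prob_def map_pmf_nth_ap_design[OF assms, symmetric] by (simp add: vimage_def)
qed

lemma expectation_ht_estimator:
  assumes "0 < p" "p < 1"
  shows "measure_pmf.expectation (ap_design p comps) (ht_estimator p N Mt Mc Y comps) =
    (1 / real N) *
    (\<Sum>i<length comps.
       (\<Sum>j\<in>{j. j < comp_len (comps ! i) \<and> comp_edge (comps ! i) j \<in> disagree_t Mt Mc}.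
          Y (comp_edge (comps ! i) j))
     - (\<Sum>j\<in>{j. j < comp_len (comps ! i) \<and> comp_edge (comps ! i) j \<in> disagree_c Mt Mc}.
          Y (comp_edge (comps ! i) j)))"
  unfolding ht_estimator_def
  by (simp add: integrable_measure_pmf_finite[OF finite_set_pmf_ap_design]
      Bochner_Integration.integral_sum Bochner_Integration.integral_diff
      expectation_ap_design_indicator ap_prob_pos[OF assms, THEN dual_order.strict_implies_not_eq])

theorem proposition4:
  fixes A :: "'a set" and N :: nat and Mt Mc :: "'a set set"
    and Y :: "'a set \<Rightarrow> real" and comps :: "'a list list" and p :: real
  assumes "finite A" and "card A = 2 * N"
    and "is_matching A Mt" and "is_matching A Mc"
    and "alt_decomposition Mt Mc comps"
    and "0 < p" and "p < 1"
  shows "measure_pmf.expectation (ap_design p comps) (ht_estimator p N Mt Mc Y comps)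
           = ate N Mt Mc Y"
proof -
  have finite: "finite Mt" "finite Mc"
    using assms(1,3,4) by (auto intro: finite_matching)
  have "disagree_t Mt Mc \<subseteq> disagree Mt Mc" "disagree_c Mt Mc \<subseteq> disagree Mt Mc"
    by (auto simp: disagree_t_def disagree_c_def)
  then have "measure_pmf.expectation (ap_design p comps) (ht_estimator p N Mt Mc Y comps)
      = (1 / real N) * (sum Y (disagree_t Mt Mc) - sum Y (disagree_c Mt Mc))"
    by (simp add: expectation_ht_estimator[OF assms(6,7)] sum_subtractf
        sum_disagree_subset_by_components[OF assms(5)])
  also have "\<dots> = ate N Mt Mc Y"
    by (simp add: ate_def sum_disagree_t_diff_sum_disagree_c[OF finite])
  finally show ?thesis .
qed

end
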